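(* In the setting described in the context, suppose $T$ is irreducible and $A$ is irreducible. Then $G$ is irreducible, or, after a simultaneous permutation of rows and columns, it takes the form \[ G=\begin{pmatrix}G_1&O\\ G_{\bullet,1}&G_\bullet\end{pmatrix}, \] where $G_1$ is irreducible and $G_\bullet$ is strictly lower triangular.
   Context: Let $M_0,M$ be positive integers. Consider a discrete-time Markov chain $\{(X_n,S_n)\}_{n\ge0}$ of M/G/1 type with state space $\{(0,j):1\le j\le M_0\}\cup\{(k,j):k\ge1,1\le j\le M\}$ (level $k$ = states with first coordinate $k$), with transition matrix in lexicographic order \[ T=\begin{pmatrix}B(0)&B(1)&B(2)&\cdots\\ C(0)&A(1)&A(2)&\cdots\\ O&A(0)&A(1)&\cdots\\ O&O&A(0)&\cdots\\ \vdots&\vdots&\vdots&\ddots\end{pmatrix}, \] with nonnegative blocks $A(k)$ ($M\times M$, $k\ge0$), $B(0)$ ($M_0\times M_0$), $B(k)$ ($M_0\times M$, $k\ge1$), $C(0)$ ($M\times M_0$); $A=\sum_{k\ge0}A(k)$ is stochastic and $B(0)e+\sum_{k\ge1}B(k)e=e$. $G$ is the $M\times M$ matrix with $[G]_{i,j}=\Pr[S_{a(k)}=j\mid X_0=k+1,S_0=i]$ for any fixed $k\ge1$ (independent of $k$), where $a(k)=\inf\{n\ge1:X_n=k\}$; equivalently $G$ is the minimal nonnegative solution of $X=\sum_{k\ge0}A(k)X^k$. *)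

theory Defs
  imports Complex_Main
begin

text \<open>Matrices are represented as functions nat => nat => real; an n x n matrix
  only uses indices below n (0-indexed).\<close>

definition mmul :: "nat \<Rightarrow> (nat \<Rightarrow> nat \<Rightarrow> real) \<Rightarrow> (nat \<Rightarrow> nat \<Rightarrow> real) \<Rightarrow> nat \<Rightarrow> nat \<Rightarrow> real" where
  "mmul n X Y i j = (\<Sum>l<n. X i l * Y l j)"

fun mpow :: "nat \<Rightarrow> (nat \<Rightarrow> nat \<Rightarrow> real) \<Rightarrow> nat \<Rightarrow> nat \<Rightarrow> nat \<Rightarrow> real" where
  "mpow n X 0 = (\<lambda>i j. if i = j then 1 else 0)"
| "mpow n X (Suc k) = mmul n X (mpow n X k)"

definition irreducible_on :: "'s set \<Rightarrow> ('s \<Rightarrow> 's \<Rightarrow> real) \<Rightarrow> bool" where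
  "irreducible_on S P \<longleftrightarrow>
     (\<forall>s\<in>S. \<forall>t\<in>S. (s, t) \<in> {(u, v). u \<in> S \<and> v \<in> S \<and> P u v > 0}\<^sup>+)"

definition valid_state :: "nat \<Rightarrow> nat \<Rightarrow> nat \<times> nat \<Rightarrow> bool" where
  "valid_state M0 M s = (if fst s = 0 then snd s < M0 else snd s < M)"

text \<open>Transition matrix T. B 0 is the M0 x M0 block, B k (k >= 1) the M0 x M blocks,
  C0 the M x M0 block, A k the M x M blocks.\<close>

definition Tmat ::
  "(nat \<Rightarrow> nat \<Rightarrow> nat \<Rightarrow> real) \<Rightarrow> (nat \<Rightarrow> nat \<Rightarrow> nat \<Rightarrow> real) \<Rightarrow> (nat \<Rightarrow> nat \<Rightarrow> real)
    \<Rightarrow> nat \<times> nat \<Rightarrow> nat \<times> nat \<Rightarrow> real" where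
  "Tmat A B C0 s t =
     (let (k, i) = s; (k', j) = t in
      if k = 0 then B k' i j
      else if k' = 0 then (if k = 1 then C0 i j else 0)
      else if k \<le> k' + 1 then A (k' + 1 - k) i j else 0)"

definition is_G_solution :: "nat \<Rightarrow> (nat \<Rightarrow> nat \<Rightarrow> nat \<Rightarrow> real) \<Rightarrow> (nat \<Rightarrow> nat \<Rightarrow> real) \<Rightarrow> bool" where
  "is_G_solution M A X \<longleftrightarrow>
     (\<forall>i<M. \<forall>j<M. X i j \<ge> 0) \<and>
     (\<forall>i<M. \<forall>j<M. (\<lambda>k. mmul M (A k) (mpow M X k) i j) sums X i j)"

definition is_minimal_G :: "nat \<Rightarrow> (nat \<Rightarrow> nat \<Rightarrow> nat \<Rightarrow> real) \<Rightarrow> (nat \<Rightarrow> nat \<Rightarrow> real) \<Rightarrow> bool" where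
  "is_minimal_G M A G \<longleftrightarrow> is_G_solution M A G \<and>
     (\<forall>X. is_G_solution M A X \<longrightarrow> (\<forall>i<M. \<forall>j<M. G i j \<le> X i j))"

end

(*
  Let R be the support graph of G, with an edge i \<rightarrow> j iff G i j > 0.  Since G = \<Sum>k A(k) G^k,
  R absorbs shifts: if A(k) x l > 0 and R has a path of length k from l to y, then x \<rightarrow> y.
  Every path of the irreducible chain from level 2 to level 0 passes through level 1, and
  reading it off level by level gives an outgoing edge of R at every phase; so the finite
  graph R contains a cycle.  Following a path of the irreducible matrix \<Sum>k A(k) and going
  round a cycle often enough to absorb the accumulated shifts, every phase reaches every
  node lying on a cycle.  Hence the nodes on cycles form a closed, strongly connected class,
  while the remaining nodes carry no cycle and can be ordered topologically: listing the
  class first and then the rest in reverse topological order yields the block form.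
*)

theory Submission
  imports Defs
begin

definition support_graph :: "'s set \<Rightarrow> ('s \<Rightarrow> 's \<Rightarrow> real) \<Rightarrow> ('s \<times> 's) set" where
  "support_graph S P = {(u, v). u \<in> S \<and> v \<in> S \<and> 0 < P u v}"

lemma irreducible_on_iff_support_graph:
  "irreducible_on S P \<longleftrightarrow> (\<forall>s\<in>S. \<forall>t\<in>S. (s, t) \<in> (support_graph S P)\<^sup>+)"
  by (simp add: irreducible_on_def support_graph_def)

lemma relpow_in_closed_set:
  assumes "R \<subseteq> S \<times> S" "(a, b) \<in> R ^^ n" "a \<in> S"
  shows "b \<in> S"
  using assms(2,3)
proof (induction n arbitrary: b)
  case (Suc n)
  then obtain y where "(a, y) \<in> R ^^ n" "(y, b) \<in> R" by (meson relpow_Suc_E)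
  with Suc.IH Suc.prems assms(1) show ?case by auto
qed simp

lemma relpow_cycle_mult:
  assumes "(b, b) \<in> R ^^ p"
  shows "(b, b) \<in> R ^^ (p * K)"
proof (induction K)
  case (Suc K)
  with assms have "(b, b) \<in> R ^^ p O R ^^ (p * K)" by auto
  then show ?case by (simp add: relpow_add[symmetric])
qed simp

lemma finite_graph_has_cycle:
  assumes "finite S" "S \<noteq> {}" "R \<subseteq> S \<times> S" "\<And>x. x \<in> S \<Longrightarrow> \<exists>y. (x, y) \<in> R"
  shows "\<exists>c\<in>S. (c, c) \<in> R\<^sup>+"
proof (rule ccontr)
  assume no_cycle: "\<not> (\<exists>c\<in>S. (c, c) \<in> R\<^sup>+)"
  have "acyclic R"
    unfolding acyclic_def
    using no_cycle assms(3) by (metis converse_tranclE mem_Sigma_iff subsetD)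
  moreover have "finite (R\<inverse>)"
    using assms(1,3) by (simp add: finite_subset)
  ultimately have "wf (R\<inverse>)"
    by (simp add: wf_iff_acyclic_if_finite)
  then obtain z where "z \<in> S" "\<forall>y. (y, z) \<in> R\<inverse> \<longrightarrow> y \<notin> S"
    using assms(2) unfolding wf_eq_minimal by blast
  with assms(3,4) show False by blast
qed

lemma acyclic_part_topological_list:
  assumes "finite N" "\<And>y. y \<in> N \<Longrightarrow> (y, y) \<notin> R\<^sup>+"
  shows "\<exists>xs. distinct xs \<and> set xs = N \<and>
    (\<forall>i j. i \<le> j \<and> j < length xs \<longrightarrow> (xs ! i, xs ! j) \<notin> R)"
proof -
  \<comment> \<open>the number of nodes of N reachable from x drops strictly along every edge into N\<close>
  define f where "f x = card {z \<in> N. (x, z) \<in> R\<^sup>+}" for x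
  have f_decreasing: "f y < f x" if "y \<in> N" "(x, y) \<in> R" for x y
  proof -
    have "{z \<in> N. (y, z) \<in> R\<^sup>+} \<subset> {z \<in> N. (x, z) \<in> R\<^sup>+}"
      using that assms(2) by (auto intro: trancl_into_trancl2)
    then show ?thesis
      unfolding f_def using assms(1) by (simp add: psubset_card_mono)
  qed
  obtain ys where "distinct ys" "set ys = N"
    using finite_distinct_list[OF assms(1)] by blast
  define xs where "xs = sort_key f ys"
  have "distinct xs" "set xs = N"
    using \<open>distinct ys\<close> \<open>set ys = N\<close> unfolding xs_def by auto
  moreover have "(xs ! i, xs ! j) \<notin> R" if "i \<le> j" "j < length xs" for i j
  proof
    assume "(xs ! i, xs ! j) \<in> R"
    then have "f (xs ! j) < f (xs ! i)"
      using that \<open>set xs = N\<close> by (auto intro: f_decreasing)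
    moreover have "f (xs ! i) \<le> f (xs ! j)"
      using sorted_nth_mono[of "map f xs" i j] that unfolding xs_def by simp
    ultimately show False by simp
  qed
  ultimately show ?thesis by blast
qed

lemma irreducible_on_closed_class:
  assumes "C \<subseteq> S" "support_graph S P `` C \<subseteq> C"
    and "\<And>a b. a \<in> C \<Longrightarrow> b \<in> C \<Longrightarrow> (a, b) \<in> (support_graph S P)\<^sup>+"
  shows "irreducible_on C P"
proof -
  have "(a, b) \<in> (support_graph C P)\<^sup>+ \<and> b \<in> C"
    if "(a, b) \<in> (support_graph S P)\<^sup>+" "a \<in> C" for a b
    using that
  proof (induction b rule: trancl_induct)
    case (base b)
    with assms(2) have "b \<in> C" by blast
    with base show ?case by (auto simp: support_graph_def)
  next
    case (step b b')
    with assms(2) have "b' \<in> C" by blast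
    with step have "(b, b') \<in> support_graph C P" by (auto simp: support_graph_def)
    with step.IH step.prems have "(a, b') \<in> (support_graph C P)\<^sup>+"
      by (blast intro: trancl_into_trancl)
    with \<open>b' \<in> C\<close> show ?case by blast
  qed
  with assms(3) show ?thesis
    unfolding irreducible_on_iff_support_graph by blast
qed

lemma irreducible_on_reindex:
  assumes "inj_on \<sigma> S" "irreducible_on (\<sigma> ` S) P"
  shows "irreducible_on S (\<lambda>i j. P (\<sigma> i) (\<sigma> j))"
proof -
  let ?Q = "support_graph S (\<lambda>i j. P (\<sigma> i) (\<sigma> j))"
  have lift: "\<exists>j\<in>S. \<sigma> j = b \<and> (i, j) \<in> ?Q\<^sup>+"
    if "(\<sigma> i, b) \<in> (support_graph (\<sigma> ` S) P)\<^sup>+" "i \<in> S" for i b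
    using that(1)
  proof (induction b rule: trancl_induct)
    case (base b)
    then obtain j where "j \<in> S" "\<sigma> j = b" by (auto simp: support_graph_def)
    with base that(2) show ?case by (auto simp: support_graph_def)
  next
    case (step b b')
    then obtain j where j: "j \<in> S" "\<sigma> j = b" "(i, j) \<in> ?Q\<^sup>+" by blast
    from step obtain j' where "j' \<in> S" "\<sigma> j' = b'" by (auto simp: support_graph_def)
    with step j have "(j, j') \<in> ?Q" by (auto simp: support_graph_def)
    with j(3) have "(i, j') \<in> ?Q\<^sup>+" by (rule trancl_into_trancl)
    with \<open>j' \<in> S\<close> \<open>\<sigma> j' = b'\<close> show ?case by blast
  qed
  show ?thesis
    unfolding irreducible_on_iff_support_graph
  proof (intro ballI)
    fix i j assume "i \<in> S" "j \<in> S"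
    with assms(2) have "(\<sigma> i, \<sigma> j) \<in> (support_graph (\<sigma> ` S) P)\<^sup>+"
      unfolding irreducible_on_iff_support_graph by blast
    with lift \<open>i \<in> S\<close> obtain j' where "j' \<in> S" "\<sigma> j' = \<sigma> j" "(i, j') \<in> ?Q\<^sup>+" by blast
    moreover from this have "j' = j" using inj_onD[OF assms(1)] \<open>j \<in> S\<close> by blast
    ultimately show "(i, j) \<in> ?Q\<^sup>+" by simp
  qed
qed

lemma cyclic_nodes_closed_class:
  fixes S :: "'s set" and P :: "'s \<Rightarrow> 's \<Rightarrow> real"
  defines "R \<equiv> support_graph S P"
  assumes reach: "\<And>x b. x \<in> S \<Longrightarrow> (b, b) \<in> R\<^sup>+ \<Longrightarrow> (x, b) \<in> R\<^sup>+"
  shows "R `` {b. (b, b) \<in> R\<^sup>+} \<subseteq> {b. (b, b) \<in> R\<^sup>+}"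
    and "irreducible_on {b. (b, b) \<in> R\<^sup>+} P"
proof -
  have R_sub: "R \<subseteq> S \<times> S"
    unfolding R_def support_graph_def by auto
  then have cyclic_sub: "{b. (b, b) \<in> R\<^sup>+} \<subseteq> S"
    using trancl_subset_Sigma by blast
  show closed: "R `` {b. (b, b) \<in> R\<^sup>+} \<subseteq> {b. (b, b) \<in> R\<^sup>+}"
  proof
    fix b assume "b \<in> R `` {b. (b, b) \<in> R\<^sup>+}"
    then obtain a where "(a, a) \<in> R\<^sup>+" "(a, b) \<in> R" by blast
    with R_sub reach[of b a] have "(b, a) \<in> R\<^sup>+" by blast
    with \<open>(a, b) \<in> R\<close> show "b \<in> {b. (b, b) \<in> R\<^sup>+}" by (auto intro: trancl_into_trancl)
  qed
  show "irreducible_on {b. (b, b) \<in> R\<^sup>+} P"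
    using cyclic_sub closed reach unfolding R_def by (intro irreducible_on_closed_class) auto
qed

lemma block_lower_triangular_form:
  fixes M :: nat and P :: "nat \<Rightarrow> nat \<Rightarrow> real"
  defines "R \<equiv> support_graph {..<M} P"
  assumes nonneg: "\<forall>i<M. \<forall>j<M. 0 \<le> P i j"
    and cycle: "(c, c) \<in> R\<^sup>+"
    and reach: "\<And>x b. x < M \<Longrightarrow> (b, b) \<in> R\<^sup>+ \<Longrightarrow> (x, b) \<in> R\<^sup>+"
  shows "\<exists>\<sigma> m. bij_betw \<sigma> {..<M} {..<M} \<and> 0 < m \<and> m \<le> M \<and>
       (\<forall>i<m. \<forall>j. m \<le> j \<and> j < M \<longrightarrow> P (\<sigma> i) (\<sigma> j) = 0) \<and>
       irreducible_on {..<m} (\<lambda>i j. P (\<sigma> i) (\<sigma> j)) \<and>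
       (\<forall>i j. m \<le> i \<and> i \<le> j \<and> j < M \<longrightarrow> P (\<sigma> i) (\<sigma> j) = 0)"
proof -
  define C where "C = {b. (b, b) \<in> R\<^sup>+}"
  have "R \<subseteq> {..<M} \<times> {..<M}"
    unfolding R_def support_graph_def by auto
  then have C_sub: "C \<subseteq> {..<M}"
    unfolding C_def using trancl_subset_Sigma by blast
  have C_closed: "R `` C \<subseteq> C" and C_irreducible: "irreducible_on C P"
    using cyclic_nodes_closed_class[of "{..<M}" P] reach unfolding C_def R_def by auto
  obtain cs where cs: "distinct cs" "set cs = C"
    using finite_distinct_list finite_subset[OF C_sub] by blast
  obtain xs where xs: "distinct xs" "set xs = {..<M} - C"
    and backward: "\<And>i j. i \<le> j \<Longrightarrow> j < length xs \<Longrightarrow> (xs ! i, xs ! j) \<notin> R"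
    using acyclic_part_topological_list[of "{..<M} - C" R] unfolding C_def by blast
  define L where "L = cs @ xs"
  define m where "m = length cs"
  define \<sigma> where "\<sigma> i = L ! i" for i
  have L: "distinct L" "set L = {..<M}"
    unfolding L_def using cs xs C_sub by auto
  then have len_L: "length L = M"
    using distinct_card by fastforce
  have bij: "bij_betw \<sigma> {..<M} {..<M}"
    unfolding \<sigma>_def using bij_betw_nth[OF L(1)] L(2) len_L by (simp add: lessThan_def)
  have top: "\<sigma> i = cs ! i" if "i < m" for i
    using that unfolding \<sigma>_def L_def m_def by (simp add: nth_append)
  have bottom: "\<sigma> i = xs ! (i - m)" if "m \<le> i" for i
    using that unfolding \<sigma>_def L_def m_def by (simp add: nth_append)
  have len_xs: "length xs = M - m"
    using len_L unfolding L_def m_def by simp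
  have zero_off_R: "P (\<sigma> i) (\<sigma> j) = 0" if "(\<sigma> i, \<sigma> j) \<notin> R" "i < M" "j < M" for i j
  proof -
    have "\<sigma> i < M" "\<sigma> j < M"
      using that(2,3) bij_betwE[OF bij] by auto
    moreover from this have "\<not> 0 < P (\<sigma> i) (\<sigma> j)"
      using that(1) unfolding R_def support_graph_def by auto
    ultimately show ?thesis using nonneg by force
  qed
  have "c \<in> C" using cycle unfolding C_def by simp
  then have "0 < m" using cs unfolding m_def by (cases cs) auto
  moreover have "m \<le> M" using len_L unfolding L_def m_def by simp
  moreover have "P (\<sigma> i) (\<sigma> j) = 0" if "i < m" "m \<le> j" "j < M" for i j
  proof (rule zero_off_R)
    have "\<sigma> i \<in> C" "\<sigma> j \<notin> C"
      using that top bottom cs xs len_xs by (auto simp: m_def)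
    with C_closed show "(\<sigma> i, \<sigma> j) \<notin> R" by blast
  qed (use that in auto)
  moreover have "P (\<sigma> i) (\<sigma> j) = 0" if "m \<le> i" "i \<le> j" "j < M" for i j
    using that backward[of "i - m" "j - m"] bottom len_xs by (intro zero_off_R) auto
  moreover have "irreducible_on {..<m} (\<lambda>i j. P (\<sigma> i) (\<sigma> j))"
  proof (rule irreducible_on_reindex)
    have "\<sigma> ` {..<m} = C"
      using top cs unfolding m_def by (auto simp: in_set_conv_nth image_iff)
    with C_irreducible show "irreducible_on (\<sigma> ` {..<m}) P" by simp
    show "inj_on \<sigma> {..<m}"
      using bij_betw_imp_inj_on[OF bij] \<open>m \<le> M\<close> by (auto intro: inj_on_subset)
  qed
  ultimately show ?thesis using bij by blast
qed

lemma suminf_pos_imp_pos_term: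
  fixes f :: "nat \<Rightarrow> real"
  assumes "\<And>k. 0 \<le> f k" "0 < suminf f"
  shows "\<exists>k. 0 < f k"
proof (rule ccontr)
  assume "\<nexists>k. 0 < f k"
  then have "f k \<le> 0" for k
    by (simp add: not_less)
  with assms(1) have "f = (\<lambda>k. 0)"
    by (simp add: fun_eq_iff order.antisym)
  with assms(2) show False by simp
qed

lemma mpow_nonneg:
  assumes "\<forall>i<M. \<forall>j<M. 0 \<le> X i j" "i < M" "j < M"
  shows "0 \<le> mpow M X k i j"
  using assms(2,3)
proof (induction k arbitrary: i j)
  case (Suc k)
  with assms(1) show ?case
    by (auto simp: mmul_def intro!: sum_nonneg mult_nonneg_nonneg)
qed simp

lemma mpow_pos_if_relpow_support:
  assumes nonneg: "\<forall>i<M. \<forall>j<M. 0 \<le> X i j"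
    and "(l, y) \<in> support_graph {..<M} X ^^ k" "l < M"
  shows "0 < mpow M X k l y"
  using assms(2,3)
proof (induction k arbitrary: l)
  case (Suc k)
  then obtain z where z: "(l, z) \<in> support_graph {..<M} X" "(z, y) \<in> support_graph {..<M} X ^^ k"
    by (meson relpow_Suc_E2)
  then have "z < M" "0 < X l z" by (auto simp: support_graph_def)
  have "y < M"
    using relpow_in_closed_set[OF _ z(2)] \<open>z < M\<close> by (auto simp: support_graph_def)
  have "0 < X l z * mpow M X k z y"
    using Suc.IH z(2) \<open>z < M\<close> \<open>0 < X l z\<close> by simp
  moreover have "\<forall>w\<in>{..<M}. 0 \<le> X l w * mpow M X k w y"
    using nonneg mpow_nonneg[OF nonneg] Suc.prems(2) \<open>y < M\<close> by auto
  ultimately show ?case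
    using \<open>z < M\<close> unfolding mpow.simps mmul_def by (intro sum_pos2[where i = z]) auto
qed simp

lemma Tmat_support_from_level_ge2:
  assumes "((h, i), (h', j)) \<in> support_graph {s. valid_state M0 M s} (Tmat A B C0)" "2 \<le> h"
  shows "1 \<le> h' \<and> h \<le> h' + 1 \<and> i < M \<and> j < M \<and> 0 < A (h' + 1 - h) i j"
  using assms by (auto simp: support_graph_def valid_state_def Tmat_def split: if_splits)

locale G_equation_solution =
  fixes M :: nat and A :: "nat \<Rightarrow> nat \<Rightarrow> nat \<Rightarrow> real" and X :: "nat \<Rightarrow> nat \<Rightarrow> real"
  assumes solution: "is_G_solution M A X"
    and A_nonneg: "\<forall>k. \<forall>i<M. \<forall>j<M. 0 \<le> A k i j"
begin

abbreviation support :: "(nat \<times> nat) set" where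
  "support \<equiv> support_graph {..<M} X"

lemma X_nonneg: "\<forall>i<M. \<forall>j<M. 0 \<le> X i j"
  using solution by (simp add: is_G_solution_def)

lemma support_subset: "support \<subseteq> {..<M} \<times> {..<M}"
  by (auto simp: support_graph_def)

lemma support_closed:
  assumes "x < M" "l < M" "0 < A k x l" "(l, y) \<in> support ^^ k"
  shows "(x, y) \<in> support"
proof -
  have "y < M"
    using relpow_in_closed_set[OF _ assms(4)] \<open>l < M\<close> by (auto simp: support_graph_def)
  have terms_nonneg: "0 \<le> A k' x w * mpow M X k' w y" if "w < M" for k' w
    using A_nonneg mpow_nonneg[OF X_nonneg] \<open>x < M\<close> \<open>y < M\<close> that by simp
  have "0 < A k x l * mpow M X k l y"
    using assms(3) mpow_pos_if_relpow_support[OF X_nonneg assms(4,2)] by simp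
  then have "0 < mmul M (A k) (mpow M X k) x y"
    unfolding mmul_def using \<open>l < M\<close> terms_nonneg by (intro sum_pos2[where i = l]) auto
  moreover have "0 \<le> mmul M (A k') (mpow M X k') x y" for k'
    unfolding mmul_def using terms_nonneg by (intro sum_nonneg) simp
  moreover have series: "(\<lambda>k. mmul M (A k) (mpow M X k) x y) sums X x y"
    using solution \<open>x < M\<close> \<open>y < M\<close> by (simp add: is_G_solution_def)
  ultimately have "0 < (\<Sum>k. mmul M (A k) (mpow M X k) x y)"
    using sums_summable[OF series] by (intro suminf_pos2)
  then have "0 < X x y"
    using sums_unique[OF series] by simp
  with \<open>x < M\<close> \<open>y < M\<close> show ?thesis by (simp add: support_graph_def)
qed

lemma support_relpow_shift:
  assumes "x < M" "l < M" "0 < A k x l" "(l, y) \<in> support ^^ (k + n)"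
  shows "(x, y) \<in> support ^^ Suc n"
proof -
  from assms(4) obtain w where w: "(l, w) \<in> support ^^ k" "(w, y) \<in> support ^^ n"
    by (auto simp: relpow_add)
  have "(x, w) \<in> support"
    using support_closed[OF assms(1-3) w(1)] .
  from this w(2) show ?thesis by (rule relpow_Suc_I2)
qed

lemma support_relpow_from_Tmat_edge:
  assumes "((h, i), (h', j)) \<in> support_graph {s. valid_state M0 M s} (Tmat A B C0)" "2 \<le> h"
    and "(j, y) \<in> support ^^ (h' - 1)"
  shows "(i, y) \<in> support ^^ (h - 1)"
proof -
  have h': "1 \<le> h'" "h \<le> h' + 1" and "i < M" "j < M" "0 < A (h' + 1 - h) i j"
    using Tmat_support_from_level_ge2[OF assms(1,2)] by auto
  have "h' - 1 = (h' + 1 - h) + (h - 2)"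
    using h' assms(2) by simp
  with assms(3) have "(i, y) \<in> support ^^ Suc (h - 2)"
    using support_relpow_shift[OF \<open>i < M\<close> \<open>j < M\<close> \<open>0 < A (h' + 1 - h) i j\<close>] by simp
  moreover have "Suc (h - 2) = h - 1"
    using assms(2) by simp
  ultimately show ?thesis by simp
qed

lemma support_descent:
  assumes "(s, t) \<in> (support_graph {s. valid_state M0 M s} (Tmat A B C0))\<^sup>+"
    and "fst t \<le> 1"
  shows "2 \<le> fst s \<Longrightarrow> \<exists>y. (snd s, y) \<in> support ^^ (fst s - 1)"
  using assms(1)
proof (induction s rule: converse_trancl_induct)
  case (base s)
  moreover have "(snd t, snd t) \<in> support ^^ (fst t - 1)"
    using assms(2) by simp
  ultimately show ?case
    by (metis prod.collapse support_relpow_from_Tmat_edge)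
next
  case (step s s')
  have "\<exists>y. (snd s', y) \<in> support ^^ (fst s' - 1)"
  proof (cases "2 \<le> fst s'")
    case False
    then have "(snd s', snd s') \<in> support ^^ (fst s' - 1)" by simp
    then show ?thesis ..
  qed (use step.IH in blast)
  with step.hyps(1) step.prems show ?case
    by (metis prod.collapse support_relpow_from_Tmat_edge)
qed

lemma support_row_nonempty:
  assumes "irreducible_on {s. valid_state M0 M s} (Tmat A B C0)" "0 < M0" "x < M"
  shows "\<exists>y. (x, y) \<in> support"
proof -
  have "valid_state M0 M (2, x)" "valid_state M0 M (0, 0)"
    using assms(2,3) by (auto simp: valid_state_def)
  with assms(1) have "((2, x), (0, 0)) \<in> (support_graph {s. valid_state M0 M s} (Tmat A B C0))\<^sup>+"
    unfolding irreducible_on_iff_support_graph by blast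
  from support_descent[OF this] show ?thesis by simp
qed

lemma support_relpow_shift_mean_edge:
  assumes "(u, v) \<in> support_graph {..<M} (\<lambda>u v. \<Sum>k. A k u v)"
  shows "\<exists>k. \<forall>n y. (v, y) \<in> support ^^ (k + n) \<longrightarrow> (u, y) \<in> support ^^ Suc n"
proof -
  have "u < M" "v < M" "0 < (\<Sum>k. A k u v)"
    using assms by (auto simp: support_graph_def)
  moreover from this have "\<exists>k. 0 < A k u v"
    using A_nonneg by (intro suminf_pos_imp_pos_term) auto
  ultimately show ?thesis
    using support_relpow_shift by blast
qed

lemma support_relpow_shift_trancl:
  assumes "(x, z) \<in> (support_graph {..<M} (\<lambda>u v. \<Sum>k. A k u v))\<^sup>+"
  shows "\<exists>c d. 0 < d \<and> (\<forall>n y. (z, y) \<in> support ^^ (c + n) \<longrightarrow> (x, y) \<in> support ^^ (d + n))"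
  using assms
proof (induction z rule: trancl_induct)
  case (base z)
  then obtain k where "\<And>n y. (z, y) \<in> support ^^ (k + n) \<Longrightarrow> (x, y) \<in> support ^^ Suc n"
    using support_relpow_shift_mean_edge by blast
  then show ?case by (intro exI[of _ k] exI[of _ 1]) simp
next
  case (step z z')
  then obtain c d where "0 < d"
    and shift: "\<And>n y. (z, y) \<in> support ^^ (c + n) \<Longrightarrow> (x, y) \<in> support ^^ (d + n)"
    by blast
  obtain k where k: "\<And>n y. (z', y) \<in> support ^^ (k + n) \<Longrightarrow> (z, y) \<in> support ^^ Suc n"
    using support_relpow_shift_mean_edge[OF step.hyps(2)] by blast
  have "(x, y) \<in> support ^^ (Suc d + n)" if "(z', y) \<in> support ^^ ((k + c) + n)" for n y
  proof -
    from that have "(z, y) \<in> support ^^ Suc (c + n)"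
      by (intro k) (simp only: add.assoc)
    then have "(x, y) \<in> support ^^ (d + Suc n)"
      by (intro shift) (simp only: add_Suc_right)
    then show ?thesis by (simp only: add_Suc_shift)
  qed
  then show ?case by (intro exI[of _ "k + c"] exI[of _ "Suc d"]) simp
qed

lemma support_reaches_cycles:
  assumes "irreducible_on {..<M} (\<lambda>i j. \<Sum>k. A k i j)" "x < M" "(b, b) \<in> support\<^sup>+"
  shows "(x, b) \<in> support\<^sup>+"
proof -
  have "b < M"
    using assms(3) trancl_subset_Sigma[OF support_subset] by auto
  with assms(1,2) have "(x, b) \<in> (support_graph {..<M} (\<lambda>u v. \<Sum>k. A k u v))\<^sup>+"
    unfolding irreducible_on_iff_support_graph by blast
  then obtain c d where "0 < d"
    and shift: "\<And>n y. (b, y) \<in> support ^^ (c + n) \<Longrightarrow> (x, y) \<in> support ^^ (d + n)"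
    using support_relpow_shift_trancl by blast
  obtain p where "0 < p" "(b, b) \<in> support ^^ p"
    using assms(3) by (auto simp: trancl_power)
  then have "(b, b) \<in> support ^^ (c + (p * c - c))"
    using relpow_cycle_mult[where K = c] by (simp add: le_add_diff_inverse)
  with shift have "(x, b) \<in> support ^^ (d + (p * c - c))" .
  with \<open>0 < d\<close> show ?thesis
    by (auto simp: trancl_power)
qed

end

theorem proposition2p1:
  fixes M0 M :: nat
    and A :: "nat \<Rightarrow> nat \<Rightarrow> nat \<Rightarrow> real"
    and B :: "nat \<Rightarrow> nat \<Rightarrow> nat \<Rightarrow> real"
    and C0 :: "nat \<Rightarrow> nat \<Rightarrow> real"
    and G :: "nat \<Rightarrow> nat \<Rightarrow> real"
  assumes M0_pos: "0 < M0" and M_pos: "0 < M"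
    and A_nonneg: "\<forall>k. \<forall>i<M. \<forall>j<M. 0 \<le> A k i j"
    and B0_nonneg: "\<forall>i<M0. \<forall>j<M0. 0 \<le> B 0 i j"
    and B_nonneg: "\<forall>k\<ge>1. \<forall>i<M0. \<forall>j<M. 0 \<le> B k i j"
    and C0_nonneg: "\<forall>i<M. \<forall>j<M0. 0 \<le> C0 i j"
    and A_summable: "\<forall>i<M. \<forall>j<M. summable (\<lambda>k. A k i j)"
    and A_stoch: "\<forall>i<M. (\<Sum>j<M. (\<Sum>k. A k i j)) = 1"
    and B_summable: "\<forall>i<M0. \<forall>j<M. summable (\<lambda>k. B (Suc k) i j)"
    and B_stoch: "\<forall>i<M0. (\<Sum>j<M0. B 0 i j) + (\<Sum>j<M. (\<Sum>k. B (Suc k) i j)) = 1"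
    and C_stoch: "\<forall>i<M. (\<Sum>j<M0. C0 i j) + (\<Sum>j<M. (\<Sum>k. A (Suc k) i j)) = 1"
    and T_irred: "irreducible_on {s. valid_state M0 M s} (Tmat A B C0)"
    and A_irred: "irreducible_on {..<M} (\<lambda>i j. \<Sum>k. A k i j)"
    and G_def: "is_minimal_G M A G"
  shows "irreducible_on {..<M} G \<or>
    (\<exists>\<sigma> m. bij_betw \<sigma> {..<M} {..<M} \<and> 0 < m \<and> m \<le> M \<and>
       (\<forall>i<m. \<forall>j. m \<le> j \<and> j < M \<longrightarrow> G (\<sigma> i) (\<sigma> j) = 0) \<and>
       irreducible_on {..<m} (\<lambda>i j. G (\<sigma> i) (\<sigma> j)) \<and>
       (\<forall>i j. m \<le> i \<and> i \<le> j \<and> j < M \<longrightarrow> G (\<sigma> i) (\<sigma> j) = 0))"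
proof -
  interpret G_equation_solution M A G
    using G_def A_nonneg by unfold_locales (simp_all add: is_minimal_G_def)
  have "\<exists>c\<in>{..<M}. (c, c) \<in> support\<^sup>+"
    using support_subset support_row_nonempty[OF T_irred M0_pos] M_pos
    by (intro finite_graph_has_cycle) auto
  then obtain c where "(c, c) \<in> support\<^sup>+" by blast
  from block_lower_triangular_form[OF X_nonneg this support_reaches_cycles[OF A_irred]]
  show ?thesis by blast
qed

end
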